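(* Let $L$ be the operator on $l^2$ mapping $(\xi_1,\xi_2,\xi_3,\dots)$ to $(0,\dots,0,\xi_{k+1},\xi_{k+2},\dots)$ (first $k$ entries replaced by $0$), and let $Y$ be a bounded operator on $l^2$ such that (1) $(\xi,Y\xi)\ge0$ for all $\xi\in l^2$, and (2) if $L\xi=0$ and $(\xi,Y\xi)=0$ then $\xi=0$. Then there exists $\kappa>0$ such that $(\xi,(L+Y)\xi)\ge\kappa(\xi,\xi)$ for all $\xi\in l^2$.
   Context: $l^2$ is the Hilbert space of complex square-summable sequences with inner product $(\xi,\eta)=\sum_j\bar\xi_j\eta_j$; $k$ is a fixed nonnegative integer. *)

theory Defs
  imports "HOL-Analysis.Analysis" "HOL-Library.Complex_Order"
begin

text \<open>The Hilbert space l2 of complex square-summable sequences, indexed from 0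
  (index j here corresponds to xi_(j+1) in the paper).\<close>

definition l2 :: "(nat \<Rightarrow> complex) set" where
  "l2 = {x. summable (\<lambda>j. (cmod (x j))^2)}"

definition l2_inner :: "(nat \<Rightarrow> complex) \<Rightarrow> (nat \<Rightarrow> complex) \<Rightarrow> complex" where
  "l2_inner x y = (\<Sum>j. cnj (x j) * y j)"

definition l2_norm :: "(nat \<Rightarrow> complex) \<Rightarrow> real" where
  "l2_norm x = sqrt (\<Sum>j. (cmod (x j))^2)"

definition bounded_op :: "((nat \<Rightarrow> complex) \<Rightarrow> (nat \<Rightarrow> complex)) \<Rightarrow> bool" where
  "bounded_op T \<longleftrightarrow>
     (\<forall>x\<in>l2. T x \<in> l2) \<and>
     (\<forall>x\<in>l2. \<forall>y\<in>l2. T (\<lambda>j. x j + y j) = (\<lambda>j. T x j + T y j)) \<and>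
     (\<forall>c. \<forall>x\<in>l2. T (\<lambda>j. c * x j) = (\<lambda>j. c * T x j)) \<and>
     (\<exists>C. \<forall>x\<in>l2. l2_norm (T x) \<le> C * l2_norm x)"

definition Lop :: "nat \<Rightarrow> (nat \<Rightarrow> complex) \<Rightarrow> (nat \<Rightarrow> complex)" where
  "Lop k x = (\<lambda>j. if j < k then 0 else x j)"

end

theory Submission
  imports Defs
begin

(* Split \<xi> = a + b with a supported on the first k coordinates and b = L \<xi>.
   The form (\<xi>, Y \<xi>) is positive definite on the finite-dimensional space of such a
   (hypothesis (2) with L a = 0), so by compactness of its unit sphere it dominates
   m \<parallel>a\<parallel>^2 there. Boundedness of Y and Cauchy-Schwarz bound the cross terms by
   2 C \<parallel>a\<parallel> \<parallel>b\<parallel>, and (\<xi>, L \<xi>) = \<parallel>b\<parallel>^2. Adding a small multiple of the lower bound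
   (\<xi>, Y \<xi>) \<ge> m \<parallel>a\<parallel>^2 - 2 C \<parallel>a\<parallel> \<parallel>b\<parallel> to \<parallel>b\<parallel>^2 absorbs the cross term. *)

lemma l2_summable: "x \<in> l2 \<Longrightarrow> summable (\<lambda>j. (cmod (x j))\<^sup>2)"
  by (simp add: l2_def)

lemma l2_norm_square: "x \<in> l2 \<Longrightarrow> (l2_norm x)\<^sup>2 = (\<Sum>j. (cmod (x j))\<^sup>2)"
  by (simp add: l2_norm_def l2_summable suminf_nonneg)

lemma l2_norm_nonneg: "x \<in> l2 \<Longrightarrow> 0 \<le> l2_norm x"
  by (simp add: l2_norm_def l2_summable suminf_nonneg)

lemma l2_dominated:
  assumes "x \<in> l2" and "\<And>j. cmod (y j) \<le> cmod (x j)"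
  shows "y \<in> l2"
  using assms unfolding l2_def
  by (auto intro!: summable_comparison_test'[of "\<lambda>j. (cmod (x j))\<^sup>2"] power_mono)

lemma l2_finite_support:
  assumes "\<And>j. k \<le> j \<Longrightarrow> x j = 0"
  shows "x \<in> l2"
  unfolding l2_def using assms
  by (auto intro!: summable_finite[of "{..<k}"]) (meson not_le)

lemma l2_add:
  assumes "x \<in> l2" "y \<in> l2"
  shows "(\<lambda>j. x j + y j) \<in> l2"
  unfolding l2_def
proof (rule CollectI, rule summable_comparison_test')
  show "summable (\<lambda>j. 2 * (cmod (x j))\<^sup>2 + 2 * (cmod (y j))\<^sup>2)"
    using assms by (intro summable_add summable_mult) (auto simp: l2_summable)
  show "norm ((cmod (x j + y j))\<^sup>2) \<le> 2 * (cmod (x j))\<^sup>2 + 2 * (cmod (y j))\<^sup>2" for j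
  proof -
    have "(cmod (x j + y j))\<^sup>2 \<le> (cmod (x j) + cmod (y j))\<^sup>2"
      by (simp add: power_mono norm_triangle_ineq)
    also have "\<dots> \<le> 2 * (cmod (x j))\<^sup>2 + 2 * (cmod (y j))\<^sup>2"
      using sum_squares_bound[of "cmod (x j)" "cmod (y j)"] by (simp add: power2_sum)
    finally show ?thesis by simp
  qed
qed

lemma summable_l2_norm_mult:
  assumes "x \<in> l2" "y \<in> l2"
  shows "summable (\<lambda>j. cmod (x j) * cmod (y j))"
proof (rule summable_comparison_test')
  show "summable (\<lambda>j. ((cmod (x j))\<^sup>2 + (cmod (y j))\<^sup>2) / 2)"
    using assms by (intro summable_divide summable_add) (auto simp: l2_summable)
  show "norm (cmod (x j) * cmod (y j)) \<le> ((cmod (x j))\<^sup>2 + (cmod (y j))\<^sup>2) / 2" for j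
    using sum_squares_bound[of "cmod (x j)" "cmod (y j)"] by simp
qed

lemma summable_l2_inner:
  "x \<in> l2 \<Longrightarrow> y \<in> l2 \<Longrightarrow> summable (\<lambda>j. cnj (x j) * y j)"
  by (rule summable_norm_cancel) (simp add: norm_mult summable_l2_norm_mult)

lemma l2_inner_Cauchy_Schwarz:
  assumes "x \<in> l2" "y \<in> l2"
  shows "cmod (l2_inner x y) \<le> l2_norm x * l2_norm y"
proof -
  have "cmod (l2_inner x y) \<le> (\<Sum>j. cmod (x j) * cmod (y j))"
    unfolding l2_inner_def
    using summable_norm[of "\<lambda>j. cnj (x j) * y j"] summable_l2_norm_mult[OF assms]
    by (simp add: norm_mult)
  also have "\<dots> \<le> l2_norm x * l2_norm y"
  proof (rule suminf_le_const[OF summable_l2_norm_mult[OF assms]])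
    fix n
    have partial: "L2_set (\<lambda>j. cmod (z j)) {..<n} \<le> l2_norm z" if "z \<in> l2" for z
      unfolding L2_set_def l2_norm_def
      using sum_le_suminf[OF l2_summable[OF that]] by auto
    have "(\<Sum>j<n. cmod (x j) * cmod (y j))
        \<le> L2_set (\<lambda>j. cmod (x j)) {..<n} * L2_set (\<lambda>j. cmod (y j)) {..<n}"
      using L2_set_mult_ineq[of "\<lambda>j. cmod (x j)" "\<lambda>j. cmod (y j)"] by simp
    also have "\<dots> \<le> l2_norm x * l2_norm y"
      using partial assms by (intro mult_mono) (auto simp: L2_set_nonneg l2_norm_nonneg)
    finally show "(\<Sum>j<n. cmod (x j) * cmod (y j)) \<le> l2_norm x * l2_norm y" .
  qed
  finally show ?thesis .
qed

lemma l2_inner_add_left: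
  "x \<in> l2 \<Longrightarrow> y \<in> l2 \<Longrightarrow> z \<in> l2 \<Longrightarrow>
    l2_inner (\<lambda>j. x j + y j) z = l2_inner x z + l2_inner y z"
  unfolding l2_inner_def by (simp add: distrib_right suminf_add summable_l2_inner)

lemma l2_inner_add_right:
  "x \<in> l2 \<Longrightarrow> y \<in> l2 \<Longrightarrow> z \<in> l2 \<Longrightarrow>
    l2_inner x (\<lambda>j. y j + z j) = l2_inner x y + l2_inner x z"
  unfolding l2_inner_def by (simp add: distrib_left suminf_add summable_l2_inner)

lemma l2_inner_self:
  assumes "x \<in> l2"
  shows "l2_inner x x = complex_of_real ((l2_norm x)\<^sup>2)"
proof -
  have "(\<lambda>j. cnj (x j) * x j) = (\<lambda>j. complex_of_real ((cmod (x j))\<^sup>2))"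
    by (metis complex_norm_square mult.commute of_real_power)
  then show ?thesis
    unfolding l2_inner_def l2_norm_square[OF assms]
    by (simp add: suminf_of_real l2_summable[OF assms])
qed

lemma l2_inner_scale:
  "x \<in> l2 \<Longrightarrow> y \<in> l2 \<Longrightarrow>
    l2_inner (\<lambda>j. c * x j) (\<lambda>j. c * y j) = cnj c * c * l2_inner x y"
  unfolding l2_inner_def
  using suminf_mult[OF summable_l2_inner, of x y "cnj c * c"] by (simp add: mult_ac)

lemma bounded_op_l2: "bounded_op T \<Longrightarrow> x \<in> l2 \<Longrightarrow> T x \<in> l2"
  unfolding bounded_op_def by blast

lemma bounded_op_add:
  "bounded_op T \<Longrightarrow> x \<in> l2 \<Longrightarrow> y \<in> l2 \<Longrightarrow> T (\<lambda>j. x j + y j) = (\<lambda>j. T x j + T y j)"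
  unfolding bounded_op_def by blast

lemma bounded_op_scale:
  "bounded_op T \<Longrightarrow> x \<in> l2 \<Longrightarrow> T (\<lambda>j. c * x j) = (\<lambda>j. c * T x j)"
  unfolding bounded_op_def by blast

lemma bounded_op_norm_bound:
  assumes "bounded_op T"
  obtains C where "\<And>x. x \<in> l2 \<Longrightarrow> l2_norm (T x) \<le> C * l2_norm x"
  using assms unfolding bounded_op_def by blast

lemma l2_inner_quadratic_scale:
  "bounded_op T \<Longrightarrow> x \<in> l2 \<Longrightarrow>
    l2_inner (\<lambda>j. c * x j) (T (\<lambda>j. c * x j)) = cnj c * c * l2_inner x (T x)"
  by (simp add: bounded_op_scale bounded_op_l2 l2_inner_scale)

definition coord_subspace :: "nat \<Rightarrow> (nat \<Rightarrow> complex) set" where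
  "coord_subspace k = {x. \<forall>j\<ge>k. x j = 0}"

definition unit_vec :: "nat \<Rightarrow> nat \<Rightarrow> complex" where
  "unit_vec j = (\<lambda>i. if i = j then 1 else 0)"

lemma coord_subspace_l2: "x \<in> coord_subspace k \<Longrightarrow> x \<in> l2"
  unfolding coord_subspace_def by (rule l2_finite_support) auto

lemma coord_subspace_expansion:
  assumes "x \<in> coord_subspace k"
  shows "(\<lambda>i. \<Sum>j<k. x j * unit_vec j i) = x"
proof
  fix i
  have "(\<Sum>j<k. x j * unit_vec j i) = (\<Sum>j<k. if j = i then x i else 0)"
    by (rule sum.cong) (auto simp: unit_vec_def)
  also have "\<dots> = x i"
    using assms by (auto simp: coord_subspace_def not_less)
  finally show "(\<Sum>j<k. x j * unit_vec j i) = x i" .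
qed

lemma bounded_op_sum_unit_vec:
  assumes "bounded_op T"
  shows "T (\<lambda>i. \<Sum>j<n. c j * unit_vec j i) = (\<lambda>i. \<Sum>j<n. c j * T (unit_vec j) i)"
proof (induction n)
  case 0
  have "(\<lambda>_. 0) \<in> l2" by (rule l2_finite_support[of 0]) simp
  then show ?case using bounded_op_scale[OF assms, of "\<lambda>_. 0" 0] by simp
next
  case (Suc n)
  have unit: "unit_vec n \<in> l2"
    by (rule l2_finite_support[of "Suc n"]) (simp add: unit_vec_def)
  have "(\<lambda>i. \<Sum>j<n. c j * unit_vec j i) \<in> l2"
    by (rule l2_finite_support[of n]) (simp add: unit_vec_def)
  moreover have "(\<lambda>i. c n * unit_vec n i) \<in> l2"
    by (rule l2_finite_support[of "Suc n"]) (simp add: unit_vec_def)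
  ultimately show ?case
    using Suc bounded_op_add[OF assms] bounded_op_scale[OF assms unit, of "c n"] by simp
qed

lemma quadratic_form_coord_subspace:
  assumes "bounded_op T" "x \<in> coord_subspace k"
  shows "l2_inner x (T x) = (\<Sum>i<k. \<Sum>j<k. cnj (x i) * x j * T (unit_vec j) i)"
proof -
  have Tx: "T x = (\<lambda>i. \<Sum>j<k. x j * T (unit_vec j) i)"
    using bounded_op_sum_unit_vec[OF assms(1), of x k] coord_subspace_expansion[OF assms(2)]
    by simp
  have "l2_inner x (T x) = (\<Sum>i<k. cnj (x i) * T x i)"
    unfolding l2_inner_def
    by (rule suminf_finite) (use assms(2) in \<open>auto simp: coord_subspace_def not_less\<close>)
  then show ?thesis
    unfolding Tx by (simp add: sum_distrib_left mult_ac)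
qed

lemma l2_norm_coord_subspace:
  "x \<in> coord_subspace k \<Longrightarrow> l2_norm x = sqrt (\<Sum>j<k. (cmod (x j))\<^sup>2)"
  unfolding l2_norm_def
  by (subst suminf_finite[of "{..<k}"]) (auto simp: coord_subspace_def not_less)

lemma l2_norm_scale:
  assumes "x \<in> l2"
  shows "l2_norm (\<lambda>j. c * x j) = cmod c * l2_norm x"
proof -
  have "(\<Sum>j. (cmod (c * x j))\<^sup>2) = (cmod c)\<^sup>2 * (\<Sum>j. (cmod (x j))\<^sup>2)"
    using suminf_mult[OF l2_summable[OF assms], of "(cmod c)\<^sup>2"]
    by (simp add: norm_mult power_mult_distrib)
  then show ?thesis
    unfolding l2_norm_def by (simp add: real_sqrt_mult)
qed

lemma compact_coord_sphere:
  "compact {x \<in> coord_subspace k. l2_norm x = 1}"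
proof -
  define B where "B i = (if i < k then cball 0 1 else {0::complex})" for i
  define g where "g x = (\<Sum>j<k. (cmod (x j))\<^sup>2)" for x :: "nat \<Rightarrow> complex"
  have "compactin (product_topology (\<lambda>_. euclidean) UNIV) (PiE UNIV B)"
    by (simp add: compactin_PiE B_def)
  then have "compact (Pi UNIV B)"
    by (simp add: euclidean_product_topology PiE_UNIV_domain)
  moreover have "closed {x. g x = 1}"
    unfolding g_def
    by (intro closed_Collect_eq continuous_intros continuous_on_product_coordinates)
  ultimately have "compact (Pi UNIV B \<inter> {x. g x = 1})"
    by blast
  moreover have "{x \<in> coord_subspace k. l2_norm x = 1} = Pi UNIV B \<inter> {x. g x = 1}"
  proof (intro equalityI subsetI)
    fix x assume x: "x \<in> {x \<in> coord_subspace k. l2_norm x = 1}"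
    then have sub: "x \<in> coord_subspace k" and g1: "g x = 1"
      by (auto simp: g_def l2_norm_coord_subspace)
    have "cmod (x i) \<le> 1" if "i < k" for i
    proof -
      have "(cmod (x i))\<^sup>2 \<le> g x"
        unfolding g_def by (rule member_le_sum) (use that in auto)
      then show ?thesis using g1 by (simp add: abs_square_le_1)
    qed
    with sub g1 show "x \<in> Pi UNIV B \<inter> {x. g x = 1}"
      by (auto simp: B_def coord_subspace_def)
  next
    fix x assume x: "x \<in> Pi UNIV B \<inter> {x. g x = 1}"
    then have Bj: "x j \<in> B j" for j by blast
    have "x \<in> coord_subspace k"
    proof (unfold coord_subspace_def, intro CollectI allI impI)
      fix j assume "k \<le> j"
      then show "x j = 0" using Bj[of j] by (simp add: B_def)
    qed
    with x show "x \<in> {x \<in> coord_subspace k. l2_norm x = 1}"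
      by (simp add: g_def l2_norm_coord_subspace)
  qed
  ultimately show ?thesis by simp
qed

lemma l2_norm_pos_coord_subspace:
  assumes "x \<in> coord_subspace k" "x \<noteq> (\<lambda>_. 0)"
  shows "0 < l2_norm x"
proof -
  obtain i where "x i \<noteq> 0"
    using assms(2) by auto
  moreover from this have "i < k"
    using assms(1) by (auto simp: coord_subspace_def not_less[symmetric])
  ultimately have "0 < (\<Sum>j<k. (cmod (x j))\<^sup>2)"
    by (intro sum_pos2[of _ i]) auto
  then show ?thesis
    using assms(1) by (simp add: l2_norm_coord_subspace)
qed

lemma quadratic_form_normalize:
  assumes T: "bounded_op T" and x: "x \<in> coord_subspace k" "x \<noteq> (\<lambda>_. 0)"
  obtains u where "u \<in> coord_subspace k" "l2_norm u = 1"
    and "Re (l2_inner x (T x)) = (l2_norm x)\<^sup>2 * Re (l2_inner u (T u))"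
proof -
  define r where "r = l2_norm x"
  define u where "u j = inverse (complex_of_real r) * x j" for j
  have "x \<in> l2" and r: "0 < r"
    using x by (simp_all add: coord_subspace_l2 l2_norm_pos_coord_subspace r_def)
  have "l2_norm u = 1"
    unfolding u_def l2_norm_scale[OF \<open>x \<in> l2\<close>] using r by (simp add: norm_inverse r_def)
  moreover have "u \<in> coord_subspace k"
    using x(1) by (simp add: u_def coord_subspace_def)
  ultimately have u: "u \<in> coord_subspace k" "l2_norm u = 1"
    by simp_all
  have "x = (\<lambda>j. complex_of_real r * u j)"
    using r by (simp add: u_def fun_eq_iff)
  then have "Re (l2_inner x (T x)) = r\<^sup>2 * Re (l2_inner u (T u))"
    using l2_inner_quadratic_scale[OF T coord_subspace_l2[OF u(1)], of "complex_of_real r"]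
    by (simp add: power2_eq_square flip: of_real_mult)
  with u show thesis
    using that by (simp add: r_def)
qed

lemma continuous_on_quadratic_form_coord_subspace:
  assumes T: "bounded_op T"
  shows "continuous_on (coord_subspace k) (\<lambda>x. Re (l2_inner x (T x)))"
proof (rule continuous_on_eq)
  have "continuous_on UNIV (\<lambda>x. Re (\<Sum>i<k. \<Sum>j<k. cnj (x i) * x j * T (unit_vec j) i))"
    by (intro continuous_intros continuous_on_product_coordinates)
  then show "continuous_on (coord_subspace k)
      (\<lambda>x. Re (\<Sum>i<k. \<Sum>j<k. cnj (x i) * x j * T (unit_vec j) i))"
    by (rule continuous_on_subset) simp
  show "Re (\<Sum>i<k. \<Sum>j<k. cnj (x i) * x j * T (unit_vec j) i) = Re (l2_inner x (T x))"
    if "x \<in> coord_subspace k" for x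
    using quadratic_form_coord_subspace[OF T that] by simp
qed

lemma coord_subspace_coercive:
  assumes T: "bounded_op T"
    and pos: "\<And>x. x \<in> coord_subspace k \<Longrightarrow> x \<noteq> (\<lambda>_. 0) \<Longrightarrow> 0 < Re (l2_inner x (T x))"
  obtains m where "0 < m"
    and "\<And>x. x \<in> coord_subspace k \<Longrightarrow> m * (l2_norm x)\<^sup>2 \<le> Re (l2_inner x (T x))"
proof -
  define S where "S = {x \<in> coord_subspace k. l2_norm x = 1}"
  define Q where "Q = (\<lambda>x. Re (l2_inner x (T x)))"
  have zero: "Q (\<lambda>_. 0) = 0" "l2_norm (\<lambda>_. 0) = 0"
    by (simp_all add: Q_def l2_inner_def l2_norm_def)
  show thesis
  proof (cases "S = {}")
    case True
    show thesis
    proof (rule that[of 1])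
      fix x assume x: "x \<in> coord_subspace k"
      then have "x = (\<lambda>_. 0)"
        using quadratic_form_normalize[OF T x] True by (auto simp: S_def)
      with zero show "1 * (l2_norm x)\<^sup>2 \<le> Re (l2_inner x (T x))"
        by (simp add: Q_def)
    qed simp
  next
    case False
    have "continuous_on S Q"
      unfolding Q_def using continuous_on_quadratic_form_coord_subspace[OF T]
      by (rule continuous_on_subset) (auto simp: S_def)
    then obtain x0 where x0: "x0 \<in> S" and min: "\<And>u. u \<in> S \<Longrightarrow> Q x0 \<le> Q u"
      using continuous_attains_inf[OF compact_coord_sphere[of k, folded S_def] False] by blast
    have "0 < Q x0"
      using x0 zero(2) pos by (force simp: S_def Q_def)
    moreover have "Q x0 * (l2_norm x)\<^sup>2 \<le> Q x" if x: "x \<in> coord_subspace k" for x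
    proof (cases "x = (\<lambda>_. 0)")
      case False
      then obtain u where "u \<in> S" "Q x = (l2_norm x)\<^sup>2 * Q u"
        using quadratic_form_normalize[OF T x] by (auto simp: S_def Q_def)
      then show ?thesis
        using min[of u] by (simp add: mult.commute mult_right_mono)
    qed (simp add: zero)
    ultimately show thesis
      using that[of "Q x0"] by (simp add: Q_def)
  qed
qed

lemma absorb_cross_term:
  fixes m C x z q :: real
  assumes m: "0 < m" and q: "0 \<le> q" and bound: "m * x\<^sup>2 - 2 * C * x * z \<le> q"
  shows "min (m / 2) 1 / (1 + 4 * C\<^sup>2 / m) * (x\<^sup>2 + z\<^sup>2) \<le> z\<^sup>2 + q"
proof -
  define c where "c = 2 * C\<^sup>2 / m"
  define t where "t = 1 / (1 + 2 * c)"
  have c: "0 \<le> c" using m by (simp add: c_def)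
  have t: "0 < t" "t \<le> 1" "t * (1 + c) \<le> 1"
    using c by (simp_all add: t_def field_simps)
  have "m / 2 * (x - 2 * C / m * z)\<^sup>2 = m / 2 * x\<^sup>2 - 2 * C * x * z + c * z\<^sup>2"
    using m by (simp add: c_def power2_eq_square field_simps)
  moreover have "0 \<le> m / 2 * (x - 2 * C / m * z)\<^sup>2"
    using m by simp
  ultimately have "2 * C * x * z \<le> m / 2 * x\<^sup>2 + c * z\<^sup>2"
    by linarith
  then have "m / 2 * x\<^sup>2 - c * z\<^sup>2 \<le> q"
    using bound by linarith
  then have "t * (m / 2 * x\<^sup>2 - c * z\<^sup>2) \<le> t * q"
    using t by (simp add: mult_left_mono)
  also have "t * q \<le> q"
    using t q by (simp add: mult_left_le_one_le)
  finally have "m / 2 * t * x\<^sup>2 + (1 - t * c) * z\<^sup>2 \<le> z\<^sup>2 + q"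
    by (simp add: algebra_simps)
  moreover have "min (m / 2) 1 * t * x\<^sup>2 \<le> m / 2 * t * x\<^sup>2"
    using t by (intro mult_right_mono) auto
  moreover have "min (m / 2) 1 * t \<le> 1 * t"
    using t by (intro mult_right_mono) auto
  then have "min (m / 2) 1 * t \<le> 1 - t * c"
    using t(3) by (simp only: distrib_left mult_1_left mult_1_right)
  then have "min (m / 2) 1 * t * z\<^sup>2 \<le> (1 - t * c) * z\<^sup>2"
    by (rule mult_right_mono) simp
  moreover have "min (m / 2) 1 / (1 + 4 * C\<^sup>2 / m) = min (m / 2) 1 * t"
    by (simp add: t_def c_def)
  ultimately show ?thesis
    by (simp only: distrib_left)
qed

lemma Re_quadratic_form_add_ge:
  assumes T: "bounded_op T" and C: "\<And>x. x \<in> l2 \<Longrightarrow> l2_norm (T x) \<le> C * l2_norm x"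
    and "a \<in> l2" "b \<in> l2"
  shows "Re (l2_inner a (T a)) + Re (l2_inner b (T b)) - 2 * C * l2_norm a * l2_norm b
    \<le> Re (l2_inner (\<lambda>j. a j + b j) (T (\<lambda>j. a j + b j)))"
proof -
  have Ta: "T a \<in> l2" and Tb: "T b \<in> l2"
    using assms by (simp_all add: bounded_op_l2)
  have cross: "- (l2_norm x * (C * l2_norm y)) \<le> Re (l2_inner x (T y))"
    if "x \<in> l2" "y \<in> l2" for x y
  proof -
    have "cmod (l2_inner x (T y)) \<le> l2_norm x * l2_norm (T y)"
      using that T by (simp add: l2_inner_Cauchy_Schwarz bounded_op_l2)
    also have "\<dots> \<le> l2_norm x * (C * l2_norm y)"
      using that C by (simp add: mult_left_mono l2_norm_nonneg)
    finally show ?thesis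
      using abs_Re_le_cmod[of "l2_inner x (T y)"] by linarith
  qed
  have "l2_inner (\<lambda>j. a j + b j) (T (\<lambda>j. a j + b j))
      = l2_inner a (T a) + l2_inner a (T b) + (l2_inner b (T a) + l2_inner b (T b))"
    using assms Ta Tb
    by (simp add: bounded_op_add l2_inner_add_left l2_inner_add_right l2_add)
  with cross[of a b] cross[of b a] assms(3,4) show ?thesis
    by (simp add: algebra_simps)
qed

definition head_coords :: "nat \<Rightarrow> (nat \<Rightarrow> complex) \<Rightarrow> (nat \<Rightarrow> complex)" where
  "head_coords k x = (\<lambda>j. if j < k then x j else 0)"

lemma head_coords_coord_subspace: "head_coords k x \<in> coord_subspace k"
  by (simp add: head_coords_def coord_subspace_def)

lemma head_coords_add_Lop: "(\<lambda>j. head_coords k x j + Lop k x j) = x"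
  by (simp add: head_coords_def Lop_def fun_eq_iff)

lemma Lop_l2:
  assumes "x \<in> l2"
  shows "Lop k x \<in> l2"
  by (rule l2_dominated[OF assms]) (simp add: Lop_def)

lemma l2_inner_Lop:
  assumes "x \<in> l2"
  shows "l2_inner x (Lop k x) = complex_of_real ((l2_norm (Lop k x))\<^sup>2)"
proof -
  have "l2_inner x (Lop k x) = l2_inner (Lop k x) (Lop k x)"
    unfolding l2_inner_def by (rule arg_cong[where f = suminf]) (simp add: Lop_def fun_eq_iff)
  then show ?thesis
    by (simp add: l2_inner_self Lop_l2 assms)
qed

lemma l2_norm_square_head_Lop:
  assumes "x \<in> l2"
  shows "(l2_norm x)\<^sup>2 = (l2_norm (head_coords k x))\<^sup>2 + (l2_norm (Lop k x))\<^sup>2"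
proof -
  have "head_coords k x \<in> l2"
    by (rule l2_dominated[OF assms]) (simp add: head_coords_def)
  moreover have "(\<lambda>j. (cmod (x j))\<^sup>2)
      = (\<lambda>j. (cmod (head_coords k x j))\<^sup>2 + (cmod (Lop k x j))\<^sup>2)"
    by (simp add: head_coords_def Lop_def fun_eq_iff)
  ultimately show ?thesis
    using assms Lop_l2[OF assms]
    by (simp add: l2_norm_square suminf_add l2_summable)
qed

lemma quadratic_form_pos_coord_subspace:
  assumes pos: "\<forall>\<xi>\<in>l2. l2_inner \<xi> (T \<xi>) \<ge> 0"
    and definite: "\<forall>\<xi>\<in>l2. Lop k \<xi> = (\<lambda>_. 0) \<and> l2_inner \<xi> (T \<xi>) = 0 \<longrightarrow> \<xi> = (\<lambda>_. 0)"
    and x: "x \<in> coord_subspace k" "x \<noteq> (\<lambda>_. 0)"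
  shows "0 < Re (l2_inner x (T x))"
proof -
  have "x \<in> l2" "Lop k x = (\<lambda>_. 0)"
    using x(1) by (auto simp: coord_subspace_l2 Lop_def coord_subspace_def)
  then have "0 \<le> l2_inner x (T x)" "l2_inner x (T x) \<noteq> 0"
    using pos definite x(2) by auto
  then show ?thesis
    by (auto simp: less_eq_complex_def complex_eq_iff)
qed

lemma Lop_plus_quadratic_form_ge:
  assumes T: "bounded_op T" and pos: "\<forall>\<xi>\<in>l2. l2_inner \<xi> (T \<xi>) \<ge> 0"
    and C: "\<And>x. x \<in> l2 \<Longrightarrow> l2_norm (T x) \<le> C * l2_norm x"
    and m: "0 < m"
    and coercive: "\<And>x. x \<in> coord_subspace k \<Longrightarrow> m * (l2_norm x)\<^sup>2 \<le> Re (l2_inner x (T x))"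
    and \<xi>: "\<xi> \<in> l2"
  shows "complex_of_real (min (m / 2) 1 / (1 + 4 * C\<^sup>2 / m)) * l2_inner \<xi> \<xi>
    \<le> l2_inner \<xi> (\<lambda>j. Lop k \<xi> j + T \<xi> j)"
proof -
  define a b where "a = head_coords k \<xi>" and "b = Lop k \<xi>"
  have a: "a \<in> coord_subspace k" and b: "b \<in> l2"
    using \<xi> by (simp_all add: a_def b_def head_coords_coord_subspace Lop_l2)
  have T\<xi>: "0 \<le> Re (l2_inner \<xi> (T \<xi>))" "Im (l2_inner \<xi> (T \<xi>)) = 0"
    using pos \<xi> by (auto simp: less_eq_complex_def)
  have "Re (l2_inner a (T a)) + Re (l2_inner b (T b)) - 2 * C * l2_norm a * l2_norm b
      \<le> Re (l2_inner \<xi> (T \<xi>))"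
    using Re_quadratic_form_add_ge[OF T C coord_subspace_l2[OF a] b]
    by (simp add: a_def b_def head_coords_add_Lop)
  moreover have "0 \<le> Re (l2_inner b (T b))"
    using pos b by (simp add: less_eq_complex_def)
  ultimately have "m * (l2_norm a)\<^sup>2 - 2 * C * l2_norm a * l2_norm b \<le> Re (l2_inner \<xi> (T \<xi>))"
    using coercive[OF a] by linarith
  from absorb_cross_term[OF m T\<xi>(1) this]
  have "min (m / 2) 1 / (1 + 4 * C\<^sup>2 / m) * (l2_norm \<xi>)\<^sup>2
      \<le> (l2_norm b)\<^sup>2 + Re (l2_inner \<xi> (T \<xi>))"
    unfolding l2_norm_square_head_Lop[OF \<xi>, of k] a_def b_def .
  moreover have "l2_inner \<xi> (\<lambda>j. Lop k \<xi> j + T \<xi> j)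
      = complex_of_real ((l2_norm b)\<^sup>2) + l2_inner \<xi> (T \<xi>)"
    using \<xi> b T by (simp add: b_def l2_inner_add_right l2_inner_Lop bounded_op_l2)
  ultimately show ?thesis
    using T\<xi>(2) by (simp add: l2_inner_self \<xi> less_eq_complex_def)
qed

theorem lemma1:
  fixes k :: nat and Y :: "(nat \<Rightarrow> complex) \<Rightarrow> (nat \<Rightarrow> complex)"
  assumes "bounded_op Y"
    and "\<forall>\<xi>\<in>l2. l2_inner \<xi> (Y \<xi>) \<ge> 0"
    and "\<forall>\<xi>\<in>l2. Lop k \<xi> = (\<lambda>_. 0) \<and> l2_inner \<xi> (Y \<xi>) = 0 \<longrightarrow> \<xi> = (\<lambda>_. 0)"
  shows "\<exists>\<kappa>::real. \<kappa> > 0 \<and>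
    (\<forall>\<xi>\<in>l2. l2_inner \<xi> (\<lambda>j. Lop k \<xi> j + Y \<xi> j) \<ge> complex_of_real \<kappa> * l2_inner \<xi> \<xi>)"
proof -
  obtain m where m: "0 < m"
    and coercive: "\<And>x. x \<in> coord_subspace k \<Longrightarrow> m * (l2_norm x)\<^sup>2 \<le> Re (l2_inner x (Y x))"
    using coord_subspace_coercive[OF assms(1)] quadratic_form_pos_coord_subspace[OF assms(2,3)]
    by blast
  obtain C where C: "\<And>x. x \<in> l2 \<Longrightarrow> l2_norm (Y x) \<le> C * l2_norm x"
    using bounded_op_norm_bound[OF assms(1)] by blast
  have "min (m / 2) 1 / (1 + 4 * C\<^sup>2 / m) > 0"
    using m by (simp add: add_pos_nonneg)
  with Lop_plus_quadratic_form_ge[OF assms(1,2) C m coercive] show ?thesis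
    by blast
qed

end
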